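(* Let $s\ge1$. If $c_1(z),\dots,c_g(z)\in\mathbb Z[z]$ satisfy $\sum_{l=1}^gc_l(z)\,I^{[lp^s-1]}_{p^s}(z)\in p\,\mathbb Z[z]^n$, then $c_l(z)\in p\,\mathbb Z[z]$ for all $l=1,\dots,g$. In other words, the reductions modulo $p$ of $I^{[lp^s-1]}_{p^s}(z)$, $l=1,\dots,g$, are linearly independent over $\mathbb F_p[z]$.
   Context: Let $p$ be an odd prime, $g\ge1$, $n=2g+1$, with $p>n$; $z=(z_1,\dots,z_n)$. For a positive integer $r$ put $M_r=(p^r-1)/2$, $\Phi_{p^r}(x,z)=\prod_{i=1}^n(x-z_i)^{M_r}$, expand $\Big(\frac{\Phi_{p^r}}{x-z_1},\dots,\frac{\Phi_{p^r}}{x-z_n}\Big)=\sum_iP^i_{p^r}(z)x^i$ with $P^i_{p^r}(z)\in\mathbb Z[z]^n$, and set $I^{[lp^r-1]}_{p^r}(z)=P^{lp^r-1}_{p^r}(z)$. *)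

theory Defs
  imports "HOL-Library.Poly_Mapping" "HOL-Computational_Algebra.Polynomial"
begin

text \<open>Multivariate integer polynomials in variables z_1, z_2, ... :
  finitely supported maps from monomials (exponent vectors) to coefficients;
  the ring structure is the convolution product of Poly_Mapping.\<close>
type_synonym zpoly = "(nat \<Rightarrow>\<^sub>0 nat) \<Rightarrow>\<^sub>0 int"

definition zvar :: "nat \<Rightarrow> zpoly" where
  "zvar i = Poly_Mapping.single (Poly_Mapping.single i 1) 1"

definition in_pZ :: "nat \<Rightarrow> zpoly \<Rightarrow> bool" where
  "in_pZ p f \<longleftrightarrow> (\<forall>m. int p dvd Poly_Mapping.lookup f m)"

definition in_Zz :: "nat \<Rightarrow> zpoly \<Rightarrow> bool" where
  "in_Zz n f \<longleftrightarrow> (\<forall>m\<in>Poly_Mapping.keys f. Poly_Mapping.keys m \<subseteq> {1..n})"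

definition M :: "nat \<Rightarrow> nat \<Rightarrow> nat" where
  "M p r = (p ^ r - 1) div 2"

text \<open>Phi_{p^r}(x,z) / (x - z_j), as a polynomial in x over Z[z], for z = (z_1..z_n).\<close>
definition Phi_quot :: "nat \<Rightarrow> nat \<Rightarrow> nat \<Rightarrow> nat \<Rightarrow> zpoly poly" where
  "Phi_quot n p r j =
     [:- zvar j, 1:] ^ (M p r - 1) * (\<Prod>i\<in>{1..n} - {j}. [:- zvar i, 1:] ^ M p r)"

text \<open>j-th component of P^i_{p^r}(z): coefficient of x^i.\<close>
definition Pcomp :: "nat \<Rightarrow> nat \<Rightarrow> nat \<Rightarrow> nat \<Rightarrow> nat \<Rightarrow> zpoly" where
  "Pcomp n p r i j = coeff (Phi_quot n p r j) i"

text \<open>j-th component of I^{[l p^r - 1]}_{p^r}(z).\<close>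
definition Icomp :: "nat \<Rightarrow> nat \<Rightarrow> nat \<Rightarrow> nat \<Rightarrow> nat \<Rightarrow> zpoly" where
  "Icomp n p r l j = Pcomp n p r (l * p ^ r - 1) j"

end

theory Submission
  imports Defs "HOL-Library.Product_Lexorder"
begin

text \<open>Order the monomials in z lexicographically, z_1 being the most significant variable.
  The component j = 2(g-l)+1 of I^{[l p^s - 1]} is a coefficient of a product of powers of
  the x - z_i, so its monomials are explicit: they have total degree 2(g-l)M + (M-l), exponents
  at most M, and exponent at most M-1 at z_j. Hence they lie below the greedy monomial
  nu_l = z_1^M ... z_{2(g-l)}^M z_{2(g-l)+1}^{M-l}, strictly so in the components
  j \<le> 2(g-l), and the coefficient of nu_l in the component 2(g-l)+1 is
  \<plusminus>binom(M-1, l-1), a unit modulo p. If some c_l is nonzero modulo p, take the l = k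
  maximising the sum of nu_l and the leading monomial of c_l modulo p, the largest such index;
  in the component 2(g-k)+1 of the combination the coefficient of that monomial is then
  nonzero modulo p.\<close>

abbreviation lookup where "lookup \<equiv> Poly_Mapping.lookup"
abbreviation keys where "keys \<equiv> Poly_Mapping.keys"
abbreviation single where "single \<equiv> Poly_Mapping.single"

section \<open>Coefficients of products modulo a prime\<close>

lemma lookup_mult_eq_sum_keys:
  fixes f g :: "'m::monoid_add \<Rightarrow>\<^sub>0 'b::semiring_0"
  shows "lookup (f * g) t = (\<Sum>(a, b)\<in>keys f \<times> keys g. lookup f a * lookup g b when t = a + b)"
proof -
  have "lookup (f * g) t = (\<Sum>(a, b). lookup f a * lookup g b when t = a + b)"
    by transfer (simp add: prod_fun_unfold_prod)
  also have "\<dots> = (\<Sum>(a, b)\<in>keys f \<times> keys g. lookup f a * lookup g b when t = a + b)"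
    by (rule Sum_any.expand_superset) (auto simp: in_keys_iff)
  finally show ?thesis .
qed

lemma dvd_lookup_mult_unique_pair:
  fixes f g :: "'m::monoid_add \<Rightarrow>\<^sub>0 'b::comm_ring_1"
  assumes "a + b = t"
    and "\<And>a' b'. \<not> q dvd lookup f a' \<Longrightarrow> \<not> q dvd lookup g b' \<Longrightarrow> a' + b' = t \<Longrightarrow> a' = a \<and> b' = b"
  shows "q dvd lookup (f * g) t - lookup f a * lookup g b"
proof -
  let ?K = "keys f \<times> keys g"
  let ?h = "\<lambda>(a', b'). lookup f a' * lookup g b' when t = a' + b'"
  let ?\<delta> = "\<lambda>x. if x = (a, b) then lookup f a * lookup g b else 0"
  have "(\<Sum>x\<in>?K. ?\<delta> x) = lookup f a * lookup g b"
    by (cases "(a, b) \<in> ?K") (auto simp: in_keys_iff)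
  then have "lookup (f * g) t - lookup f a * lookup g b = (\<Sum>x\<in>?K. ?h x - ?\<delta> x)"
    by (simp add: lookup_mult_eq_sum_keys sum_subtractf)
  also have "q dvd \<dots>"
  proof (rule dvd_sum)
    fix x assume "x \<in> ?K"
    obtain a' b' where x: "x = (a', b')" by fastforce
    show "q dvd ?h x - ?\<delta> x"
    proof (cases "x = (a, b) \<or> q dvd lookup f a' \<or> q dvd lookup g b' \<or> t \<noteq> a' + b'")
      case True
      then show ?thesis using assms(1) x by (auto simp: when_def)
    next
      case False
      then show ?thesis using assms(2)[of a' b'] x by auto
    qed
  qed
  finally show ?thesis .
qed

lemma dvd_lookup_mult_no_pair:
  fixes f g :: "'m::monoid_add \<Rightarrow>\<^sub>0 'b::comm_ring_1"
  assumes "\<And>a b. \<not> q dvd lookup f a \<Longrightarrow> \<not> q dvd lookup g b \<Longrightarrow> a + b \<noteq> t"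
  shows "q dvd lookup (f * g) t"
  unfolding lookup_mult_eq_sum_keys
proof (rule dvd_sum, clarify)
  fix a b
  show "q dvd (lookup f a * lookup g b when t = a + b)"
    using assms[of a b] by (cases "q dvd lookup f a") (auto simp: when_def intro: dvd_mult)
qed

lemma finite_nondvd_coeffs:
  fixes f :: "'m \<Rightarrow>\<^sub>0 'b::comm_semiring_1"
  shows "finite {m. \<not> q dvd lookup f m}"
  by (rule finite_subset[of _ "keys f"]) (auto simp: in_keys_iff)

lemma triangular_leading_terms_independent_mod:
  fixes q :: "'b::idom" and L :: "'i::linorder set"
    and c :: "'i \<Rightarrow> ('m::{linorder, ordered_cancel_comm_monoid_add} \<Rightarrow>\<^sub>0 'b)"
    and G :: "'i \<Rightarrow> 'i \<Rightarrow> ('m \<Rightarrow>\<^sub>0 'b)" and \<nu> :: "'i \<Rightarrow> 'm"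
  assumes q: "prime_elem q" and L: "finite L"
    and lead: "\<And>l k b. l \<in> L \<Longrightarrow> k \<in> L \<Longrightarrow> \<not> q dvd lookup (G l k) b \<Longrightarrow> b \<le> \<nu> l"
    and below_diagonal: "\<And>l k b. l \<in> L \<Longrightarrow> k \<in> L \<Longrightarrow> l < k \<Longrightarrow> \<not> q dvd lookup (G l k) b \<Longrightarrow> b \<noteq> \<nu> l"
    and diagonal: "\<And>k. k \<in> L \<Longrightarrow> \<not> q dvd lookup (G k k) (\<nu> k)"
    and combination: "\<And>k m. k \<in> L \<Longrightarrow> q dvd lookup (\<Sum>l\<in>L. c l * G l k) m"
    and "l \<in> L"
  shows "q dvd lookup (c l) m"
proof (rule ccontr)
  assume "\<not> q dvd lookup (c l) m"
  define A where "A = {l\<in>L. \<exists>m. \<not> q dvd lookup (c l) m}"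
  define \<mu> where "\<mu> l = Max {m. \<not> q dvd lookup (c l) m}" for l
  have \<mu>_nondvd: "\<not> q dvd lookup (c l) (\<mu> l)" if "l \<in> A" for l
    using Max_in[OF finite_nondvd_coeffs] that unfolding A_def \<mu>_def by blast
  have \<mu>_max: "a \<le> \<mu> l" if "\<not> q dvd lookup (c l) a" for l a
    using Max_ge[OF finite_nondvd_coeffs] that unfolding \<mu>_def by blast
  have "finite A" "A \<noteq> {}"
    using L \<open>l \<in> L\<close> \<open>\<not> q dvd lookup (c l) m\<close> by (auto simp: A_def)
  then obtain k where k: "k \<in> A" and k_max: "\<And>l. l \<in> A \<Longrightarrow> (\<mu> l + \<nu> l, l) \<le> (\<mu> k + \<nu> k, k)"
    using Max_in[of "(\<lambda>l. (\<mu> l + \<nu> l, l)) ` A"] Max_ge[of "(\<lambda>l. (\<mu> l + \<nu> l, l)) ` A"] by fastforce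
  define W where "W = \<mu> k + \<nu> k"
  have kL: "k \<in> L" using k by (simp add: A_def)
  have top: "q dvd lookup (c k * G k k) W - lookup (c k) (\<mu> k) * lookup (G k k) (\<nu> k)"
  proof (rule dvd_lookup_mult_unique_pair)
    fix a b
    assume a: "\<not> q dvd lookup (c k) a" and b: "\<not> q dvd lookup (G k k) b" and "a + b = W"
    have "a \<le> \<mu> k" "b \<le> \<nu> k" using \<mu>_max[OF a] lead[OF kL kL b] .
    moreover have "\<not> a < \<mu> k"
      using add_less_le_mono[of a "\<mu> k" b "\<nu> k"] \<open>b \<le> \<nu> k\<close> \<open>a + b = W\<close> by (auto simp: W_def)
    ultimately show "a = \<mu> k \<and> b = \<nu> k" using \<open>a + b = W\<close> by (simp add: W_def)
  qed (simp add: W_def)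
  have rest: "q dvd lookup (c l * G l k) W" if l: "l \<in> L - {k}" for l
  proof (rule dvd_lookup_mult_no_pair)
    fix a b
    assume a: "\<not> q dvd lookup (c l) a" and b: "\<not> q dvd lookup (G l k) b"
    have lA: "l \<in> A" using l a by (auto simp: A_def)
    have "a \<le> \<mu> l" "b \<le> \<nu> l" using \<mu>_max[OF a] lead[OF _ kL b] l by auto
    moreover have "\<mu> l + \<nu> l < W \<or> (\<mu> l + \<nu> l = W \<and> l < k)"
      using k_max[OF lA] l by (auto simp: W_def less_eq_prod_def)
    moreover have "l < k \<Longrightarrow> b \<noteq> \<nu> l" using below_diagonal[OF _ kL _ b] l by auto
    ultimately have "a + b < W"
      using add_mono[of a "\<mu> l" b "\<nu> l"] add_le_less_mono[of a "\<mu> l" b "\<nu> l"] by auto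
    then show "a + b \<noteq> W" by simp
  qed
  have "q dvd (\<Sum>l\<in>L. lookup (c l * G l k) W)"
    using combination[OF kL, of W] by (simp add: lookup_sum)
  moreover have "(\<Sum>l\<in>L. lookup (c l * G l k) W) = lookup (c k * G k k) W + (\<Sum>l\<in>L - {k}. lookup (c l * G l k) W)"
    using L kL by (simp add: sum.remove)
  moreover have "q dvd (\<Sum>l\<in>L - {k}. lookup (c l * G l k) W)"
    using rest by (rule dvd_sum)
  ultimately have "q dvd lookup (c k * G k k) W"
    by (simp add: dvd_add_left_iff)
  from dvd_diff[OF this top]
  have "q dvd lookup (c k) (\<mu> k) * lookup (G k k) (\<nu> k)" by simp
  then show False
    using q \<mu>_nondvd[OF k] diagonal[OF kL] by (simp add: prime_elem_dvd_mult_iff)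
qed

section \<open>Coefficients of products of powers of x - z_i\<close>

lemma neg_zvar_power: "(- zvar a) ^ k = single (single a k) ((-1) ^ k)"
proof (induction k)
  case (Suc k)
  have "(- zvar a) ^ Suc k = single (single a 1) (-1) * single (single a k) ((-1) ^ k)"
    by (simp only: power_Suc Suc.IH) (simp add: zvar_def single_uminus)
  then show ?case by (simp add: mult_single single_add[symmetric])
qed simp

lemma coeff_linear_zvar_power:
  "coeff ([:- zvar a, 1:] ^ k) t = single (single a (k - t)) ((-1) ^ (k - t) * int (k choose t))"
proof (cases "t \<le> k")
  case True
  then show ?thesis
    by (simp add: coeff_linear_poly_power neg_zvar_power of_nat_single mult_single mult.commute
        del: single_of_nat)
next
  case False
  then show ?thesis by (simp add: coeff_eq_0 degree_linear_power)
qed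

lemma lookup_single_single_mult:
  fixes f :: zpoly
  shows "lookup (single (single a r) c * f) b =
    (if r \<le> lookup b a then c * lookup f (b - single a r) else 0)"
proof -
  have split: "b = single a r + q \<longleftrightarrow> r \<le> lookup b a \<and> q = b - single a r" for q
  proof
    assume "r \<le> lookup b a \<and> q = b - single a r"
    then show "b = single a r + q"
      by (auto intro!: poly_mapping_eqI simp: lookup_add lookup_minus lookup_single when_def)
  qed (auto simp: lookup_add)
  have "lookup (single (single a r) c * f) b = (\<Sum>q\<in>keys f. c * lookup f q when b = single a r + q)"
    by (simp add: lookup_mult_eq_sum_keys sum.cartesian_product[symmetric] when_mult)
  also have "\<dots> = (\<Sum>q\<in>keys f. c * lookup f q when q = b - single a r when r \<le> lookup b a)"
    by (rule sum.cong) (auto simp: split when_def)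
  also have "\<dots> = (if r \<le> lookup b a then c * lookup f (b - single a r) else 0)"
    by (auto simp: when_def in_keys_iff)
  finally show ?thesis .
qed

lemma lookup_coeff_linear_power_mult:
  fixes P :: "zpoly poly"
  assumes free: "\<And>N m. lookup m a \<noteq> 0 \<Longrightarrow> lookup (coeff P N) m = 0"
  shows "lookup (coeff ([:- zvar a, 1:] ^ k * P) N) b =
    (if lookup b a \<le> k \<and> k - lookup b a \<le> N
     then (-1) ^ lookup b a * int (k choose lookup b a)
            * lookup (coeff P (N - (k - lookup b a))) (b - single a (lookup b a))
     else 0)"
proof -
  let ?\<beta> = "lookup b a"
  let ?T = "\<lambda>t. lookup (coeff ([:- zvar a, 1:] ^ k) t * coeff P (N - t)) b"
  have T: "?T t = (if t = k - ?\<beta> \<and> ?\<beta> \<le> k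
      then (-1) ^ ?\<beta> * int (k choose ?\<beta>) * lookup (coeff P (N - t)) (b - single a ?\<beta>) else 0)" for t
  proof -
    have T_eq: "?T t = (if k - t \<le> ?\<beta> then (-1) ^ (k - t) * int (k choose t)
        * lookup (coeff P (N - t)) (b - single a (k - t)) else 0)"
      by (simp add: coeff_linear_zvar_power lookup_single_single_mult)
    consider "k < t" | "t \<le> k" "k - t < ?\<beta>" | "t \<le> k" "k - t > ?\<beta>" | "t = k - ?\<beta>" "?\<beta> \<le> k"
      by linarith
    then show ?thesis
    proof cases
      case 2
      then have "lookup (b - single a (k - t)) a \<noteq> 0" by (simp add: lookup_minus)
      with 2 show ?thesis by (auto simp: T_eq free)
    next
      case 4
      then have "k - t = ?\<beta>" "k choose t = k choose ?\<beta>"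
        using binomial_symmetric[of "?\<beta>" k] by auto
      with 4 show ?thesis unfolding T_eq by simp
    qed (auto simp: T_eq)
  qed
  have "lookup (coeff ([:- zvar a, 1:] ^ k * P) N) b = (\<Sum>t\<le>N. ?T t)"
    by (simp add: coeff_mult lookup_sum)
  also have "\<dots> = (if k - ?\<beta> \<le> N \<and> ?\<beta> \<le> k
      then (-1) ^ ?\<beta> * int (k choose ?\<beta>) * lookup (coeff P (N - (k - ?\<beta>))) (b - single a ?\<beta>) else 0)"
    unfolding T by (cases "?\<beta> \<le> k") (simp_all add: sum.delta sum.delta')
  finally show ?thesis by (simp add: conj_commute)
qed

lemma lookup_coeff_prod_linear_powers:
  assumes "finite I"
  shows "lookup (coeff (\<Prod>i\<in>I. [:- zvar i, 1:] ^ e i) N) b =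
    (if keys b \<subseteq> I \<and> N + (\<Sum>i\<in>I. lookup b i) = (\<Sum>i\<in>I. e i)
     then \<Prod>i\<in>I. (-1) ^ lookup b i * int (e i choose lookup b i) else 0)"
  using assms
proof (induction I arbitrary: N b rule: finite_induct)
  case empty
  then show ?case by (auto simp: lookup_one when_def)
next
  case (insert a I)
  let ?\<beta> = "lookup b a" and ?b' = "b - single a (lookup b a)"
  let ?\<Pi> = "\<lambda>b. \<Prod>i\<in>I. (-1) ^ lookup b i * int (e i choose lookup b i)"
  have b': "lookup ?b' i = (if i = a then 0 else lookup b i)" for i
    by (simp add: lookup_minus lookup_single when_def)
  have "keys ?b' = keys b - {a}" by (auto simp: in_keys_iff b' split: if_splits)
  then have keys_b': "keys ?b' \<subseteq> I \<longleftrightarrow> keys b \<subseteq> insert a I"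
    using insert.hyps(2) by auto
  have sum_b': "(\<Sum>i\<in>I. lookup ?b' i) = (\<Sum>i\<in>I. lookup b i)"
    and prod_b': "?\<Pi> ?b' = ?\<Pi> b"
    using insert.hyps(2) by (auto intro!: sum.cong prod.cong simp: b')
  have free: "lookup (coeff (\<Prod>i\<in>I. [:- zvar i, 1:] ^ e i) N') m = 0" if "lookup m a \<noteq> 0" for m N'
  proof -
    have "a \<in> keys m" using that by (simp add: in_keys_iff)
    then have "\<not> keys m \<subseteq> I" using insert.hyps(2) by blast
    then show ?thesis by (simp add: insert.IH)
  qed
  let ?s = "(-1) ^ ?\<beta> * int (e a choose ?\<beta>)"
  have step: "lookup (coeff (\<Prod>i\<in>insert a I. [:- zvar i, 1:] ^ e i) N) b =
      (if ?\<beta> \<le> e a \<and> e a - ?\<beta> \<le> N then ?s *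
        (if keys b \<subseteq> insert a I \<and> N - (e a - ?\<beta>) + (\<Sum>i\<in>I. lookup b i) = (\<Sum>i\<in>I. e i)
         then ?\<Pi> b else 0) else 0)"
    using insert.hyps
    by (simp add: lookup_coeff_linear_power_mult[OF free] insert.IH keys_b' sum_b' prod_b')
  show ?case
  proof (cases "?\<beta> \<le> e a \<and> ?\<Pi> b \<noteq> 0")
    case True
    then have "lookup b i \<le> e i" if "i \<in> I" for i
      using that insert.hyps(1) by (auto simp: binomial_eq_0_iff)
    then have "(\<Sum>i\<in>I. lookup b i) \<le> (\<Sum>i\<in>I. e i)" by (rule sum_mono)
    then show ?thesis
      using True insert.hyps unfolding step by auto
  next
    case False
    then show ?thesis
      using insert.hyps unfolding step by (auto simp: binomial_eq_0_iff)
  qed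
qed

section \<open>The components of I modulo p\<close>

definition greedy_monomial :: "nat \<Rightarrow> nat \<Rightarrow> nat \<Rightarrow> (nat \<Rightarrow>\<^sub>0 nat)" where
  "greedy_monomial d L r = (\<Sum>i\<in>{1..L}. single i d) + single (L + 1) r"

lemma lookup_greedy_monomial:
  "lookup (greedy_monomial d L r) i = (if 1 \<le> i \<and> i \<le> L then d else if i = L + 1 then r else 0)"
proof -
  have "(\<Sum>i'\<in>{1..L}. lookup (single i' d) i) = (\<Sum>i'\<in>{1..L}. if i = i' then d else 0)"
    by (rule sum.cong) (auto simp: lookup_single when_def)
  then show ?thesis
    by (auto simp: greedy_monomial_def lookup_add lookup_sum lookup_single when_def)
qed

lemma sum_greedy_monomial:
  assumes "L + 1 \<le> n"
  shows "(\<Sum>i\<in>{1..n}. lookup (greedy_monomial d L r) i) = L * d + r"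
proof -
  have "(\<Sum>i\<in>{1..n}. lookup (greedy_monomial d L r) i)
      = (\<Sum>i\<in>{1..L}. d) + (\<Sum>i\<in>{L + 1}. r) + (\<Sum>i\<in>{L + 2..n}. 0)"
  proof -
    have "{1..n} = {1..L} \<union> {L + 1} \<union> {L + 2..n}" using assms by auto
    then show ?thesis
      by (simp add: sum.union_disjoint lookup_greedy_monomial)
  qed
  then show ?thesis by simp
qed

text \<open>Here \<open>\<le>\<close> is the lexicographic order of Poly_Mapping, not the pointwise one.\<close>
lemma le_greedy_monomial:
  assumes keys: "keys b \<subseteq> {1..n}" and bounded: "\<And>i. lookup b i \<le> d"
    and "L + 1 \<le> n" and degree: "(\<Sum>i\<in>{1..n}. lookup b i) = L * d + r"
  shows "b \<le> greedy_monomial d L r"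
proof (rule ccontr)
  let ?\<nu> = "greedy_monomial d L r"
  assume "\<not> b \<le> ?\<nu>"
  then obtain k where k: "lookup ?\<nu> k < lookup b k" and below: "\<And>i. i < k \<Longrightarrow> lookup ?\<nu> i = lookup b i"
    by (auto simp: not_le less_poly_mapping.rep_eq less_fun_def)
  have "k \<in> keys b" using k by (simp add: in_keys_iff)
  then have kn: "1 \<le> k" "k \<le> n" using keys by auto
  have "L + 1 \<le> k" using k bounded[of k] kn by (auto simp: lookup_greedy_monomial split: if_splits)
  have "(\<Sum>i\<in>{1..k}. lookup ?\<nu> i) < (\<Sum>i\<in>{1..k}. lookup b i)"
  proof (rule sum_strict_mono_ex1)
    show "\<forall>i\<in>{1..k}. lookup ?\<nu> i \<le> lookup b i"
      using below k by (metis atLeastAtMost_iff le_eq_less_or_eq order.refl less_imp_le)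
  qed (use k kn in auto)
  also have "\<dots> \<le> (\<Sum>i\<in>{1..n}. lookup b i)" using kn by (intro sum_mono2) auto
  finally show False
    using sum_greedy_monomial[OF \<open>L + 1 \<le> k\<close>, of d r] degree by simp
qed

lemma double_M_plus_one: "odd p \<Longrightarrow> 2 * M p r + 1 = p ^ r"
  by (simp add: M_def)

lemma M_ge_Suc:
  assumes "odd p" "2 * g + 1 < p" "r \<ge> 1"
  shows "g + 1 \<le> M p r"
proof -
  have "p \<le> p ^ r" using assms by (simp add: self_le_power)
  moreover have "p \<noteq> 2 * g + 2" using assms(1) by auto
  ultimately show ?thesis using assms double_M_plus_one[of p r] by linarith
qed

lemma lookup_Icomp:
  assumes "j \<in> {1..n}" and "M p r \<ge> 1"
  shows "lookup (Icomp n p r l j) b =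
    (if keys b \<subseteq> {1..n} \<and> (l * p ^ r - 1) + (\<Sum>i\<in>{1..n}. lookup b i) = n * M p r - 1
     then \<Prod>i\<in>{1..n}. (-1) ^ lookup b i * int ((if i = j then M p r - 1 else M p r) choose lookup b i)
     else 0)"
proof -
  let ?e = "\<lambda>i. if i = j then M p r - 1 else M p r"
  have "Phi_quot n p r j = [:- zvar j, 1:] ^ ?e j * (\<Prod>i\<in>{1..n} - {j}. [:- zvar i, 1:] ^ ?e i)"
    by (simp add: Phi_quot_def)
  also have "\<dots> = (\<Prod>i\<in>{1..n}. [:- zvar i, 1:] ^ ?e i)"
    using assms(1) by (simp add: prod.remove)
  finally have "Phi_quot n p r j = (\<Prod>i\<in>{1..n}. [:- zvar i, 1:] ^ ?e i)" .
  moreover have "(\<Sum>i\<in>{1..n}. ?e i) = n * M p r - 1"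
  proof -
    have "n * M p r = M p r + (n - 1) * M p r" using assms(1) by (cases n) auto
    then show ?thesis using assms by (simp add: sum.remove sum.If_cases)
  qed
  ultimately show ?thesis
    by (simp add: Icomp_def Pcomp_def lookup_coeff_prod_linear_powers)
qed

text \<open>Modulo p, d - 1 - i \<equiv> -(2i + 3)/2, which is a unit for 2i + 3 < p.\<close>
lemma not_dvd_binomial_below_half:
  fixes p d t :: nat
  assumes "prime p" "p dvd 2 * d + 1" "2 * t + 1 < p"
  shows "\<not> p dvd ((d - 1) choose t)"
  using assms(3)
proof (induction t)
  case 0
  then show ?case using assms(1) by (simp add: prime_gt_1_nat)
next
  case (Suc t)
  have "p \<le> 2 * d + 1" using assms(2) by (simp add: dvd_imp_le)
  moreover have "2 * t + 3 < p" using Suc.prems by simp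
  ultimately have "t + 2 \<le> d" by linarith
  then have d: "2 * (d - 1 - t) + (2 * t + 3) = 2 * d + 1" by arith
  show ?case
  proof
    assume "p dvd (d - 1) choose Suc t"
    then have "p dvd ((d - 1) choose t) * (d - 1 - t)"
      by (metis binomial_absorb_comp binomial_absorption dvd_mult2 mult.commute)
    then have "p dvd d - 1 - t" using Suc assms(1) by (simp add: prime_dvd_mult_iff)
    then have "p dvd 2 * t + 3" using d assms(2) by (metis dvd_add_right_iff dvd_mult)
    then show False using Suc.prems by (simp add: nat_dvd_not_less)
  qed
qed

lemma Icomp_degree_iff:
  assumes "odd p" "g + 1 \<le> M p r" "l \<in> {1..g}"
  shows "l * p ^ r - 1 + X = (2 * g + 1) * M p r - 1 \<longleftrightarrow> X = 2 * (g - l) * M p r + (M p r - l)"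
proof -
  let ?d = "M p r"
  have "l * p ^ r = 2 * l * ?d + l" by (simp flip: double_M_plus_one[OF assms(1)])
  moreover have "(2 * g + 1) * ?d = 2 * (g - l) * ?d + 2 * l * ?d + ?d" using assms(3)
    by (simp add: algebra_simps diff_mult_distrib2 flip: mult_2)
  ultimately show ?thesis using assms(2,3) by auto
qed

lemma Icomp_nonzero_exponents:
  assumes "odd p" "g + 1 \<le> M p r" "l \<in> {1..g}" "j \<in> {1..2 * g + 1}"
    and "lookup (Icomp (2 * g + 1) p r l j) b \<noteq> 0"
  shows "keys b \<subseteq> {1..2 * g + 1}"
    and "lookup b j < M p r" "\<And>i. lookup b i \<le> M p r"
    and "(\<Sum>i\<in>{1..2 * g + 1}. lookup b i) = 2 * (g - l) * M p r + (M p r - l)"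
proof -
  let ?d = "M p r"
  have d1: "?d \<ge> 1" using assms(2) by simp
  let ?\<Sigma> = "\<Sum>i\<in>{1..2 * g + 1}. lookup b i"
  let ?\<Pi> = "\<Prod>i\<in>{1..2 * g + 1}. (-1) ^ lookup b i * int ((if i = j then ?d - 1 else ?d) choose lookup b i)"
  have "keys b \<subseteq> {1..2 * g + 1} \<and> l * p ^ r - 1 + ?\<Sigma> = (2 * g + 1) * ?d - 1 \<and> ?\<Pi> \<noteq> 0"
    using assms(5)[unfolded lookup_Icomp[OF assms(4) d1]] by (metis (no_types, lifting))
  then have keys: "keys b \<subseteq> {1..2 * g + 1}" and degree: "l * p ^ r - 1 + ?\<Sigma> = (2 * g + 1) * ?d - 1"
    and "?\<Pi> \<noteq> 0" by blast+
  have le: "lookup b i \<le> (if i = j then ?d - 1 else ?d)" if "i \<in> {1..2 * g + 1}" for i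
  proof -
    have "(-1) ^ lookup b i * int ((if i = j then ?d - 1 else ?d) choose lookup b i) \<noteq> 0"
      using \<open>?\<Pi> \<noteq> 0\<close> that by (metis (no_types, lifting) finite_atLeastAtMost prod_zero_iff)
    then show ?thesis by (simp add: binomial_eq_0_iff)
  qed
  show "keys b \<subseteq> {1..2 * g + 1}" by (fact keys)
  show "lookup b j < ?d" using le[OF assms(4)] d1 by simp
  show "lookup b i \<le> ?d" for i
  proof (cases "i \<in> {1..2 * g + 1}")
    case False
    then have "lookup b i = 0" using keys by (auto simp: in_keys_iff)
    then show ?thesis by simp
  next
    case True
    show ?thesis using le[OF True] by (simp split: if_splits)
  qed
  show "?\<Sigma> = 2 * (g - l) * ?d + (?d - l)"
    using degree Icomp_degree_iff[OF assms(1-3)] by blast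
qed

lemma Icomp_le_greedy_monomial:
  assumes "odd p" "g + 1 \<le> M p r" "l \<in> {1..g}" "j \<in> {1..2 * g + 1}"
    and "lookup (Icomp (2 * g + 1) p r l j) b \<noteq> 0"
  shows "b \<le> greedy_monomial (M p r) (2 * (g - l)) (M p r - l)"
  by (rule le_greedy_monomial) (use Icomp_nonzero_exponents[OF assms] in auto)

lemma Icomp_ne_greedy_monomial:
  assumes "odd p" "g + 1 \<le> M p r" "l \<in> {1..g}" "j \<in> {1..2 * g + 1}"
    and "lookup (Icomp (2 * g + 1) p r l j) b \<noteq> 0" and "j \<le> 2 * (g - l)"
  shows "b \<noteq> greedy_monomial (M p r) (2 * (g - l)) (M p r - l)"
proof -
  have "lookup b j < M p r" by (rule Icomp_nonzero_exponents(2)[OF assms(1-5)])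
  moreover have "lookup (greedy_monomial (M p r) (2 * (g - l)) (M p r - l)) j = M p r"
    using assms(4,6) by (simp add: lookup_greedy_monomial)
  ultimately show ?thesis by auto
qed

lemma Icomp_diagonal_not_dvd:
  assumes p: "prime p" "odd p" and "2 * g + 1 < p" "r \<ge> 1" and k: "k \<in> {1..g}"
  shows "\<not> int p dvd lookup (Icomp (2 * g + 1) p r k (2 * (g - k) + 1))
                        (greedy_monomial (M p r) (2 * (g - k)) (M p r - k))"
proof -
  let ?d = "M p r" and ?L = "2 * (g - k)"
  let ?\<nu> = "greedy_monomial ?d ?L (?d - k)"
  have d: "g + 1 \<le> ?d" using M_ge_Suc assms by blast
  have j: "?L + 1 \<in> {1..2 * g + 1}" by auto
  have "keys ?\<nu> \<subseteq> {1..2 * g + 1}"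
    by (auto simp: in_keys_iff lookup_greedy_monomial split: if_splits)
  moreover have "k * p ^ r - 1 + (\<Sum>i\<in>{1..2 * g + 1}. lookup ?\<nu> i) = (2 * g + 1) * ?d - 1"
    using Icomp_degree_iff[OF p(2) d k] sum_greedy_monomial[of ?L "2 * g + 1"] by simp
  ultimately have cond: "keys ?\<nu> \<subseteq> {1..2 * g + 1} \<and>
      k * p ^ r - 1 + (\<Sum>i\<in>{1..2 * g + 1}. lookup ?\<nu> i) = (2 * g + 1) * ?d - 1" ..
  have d1: "?d \<ge> 1" using d by simp
  have coeff: "lookup (Icomp (2 * g + 1) p r k (?L + 1)) ?\<nu> =
      (\<Prod>i\<in>{1..2 * g + 1}. (-1) ^ lookup ?\<nu> i * int ((if i = ?L + 1 then ?d - 1 else ?d) choose lookup ?\<nu> i))"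
    unfolding lookup_Icomp[OF j d1] by (rule if_P[OF cond])
  have factor: "\<not> p dvd (if i = ?L + 1 then ?d - 1 else ?d) choose lookup ?\<nu> i" for i
  proof (cases "i = ?L + 1")
    case True
    have "?d - k \<le> ?d - 1" "?d - 1 - (?d - k) = k - 1" using d k by auto
    then have "(?d - 1) choose (?d - k) = (?d - 1) choose (k - 1)"
      by (metis binomial_symmetric)
    moreover have "p dvd p ^ r" using assms(4) by (simp add: dvd_power)
    then have "p dvd 2 * ?d + 1" by (simp only: double_M_plus_one[OF p(2)])
    then have "\<not> p dvd (?d - 1) choose (k - 1)"
      using k assms(3) by (intro not_dvd_binomial_below_half[OF p(1)]) auto
    ultimately show ?thesis using True by (simp add: lookup_greedy_monomial)
  next
    case False
    then show ?thesis using p(1) by (auto simp: lookup_greedy_monomial prime_gt_1_nat)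
  qed
  have "\<not> int p dvd (-1) ^ lookup ?\<nu> i * int ((if i = ?L + 1 then ?d - 1 else ?d) choose lookup ?\<nu> i)" for i
    using factor[of i] by (simp add: dvd_mult_unit_iff')
  then show ?thesis
    unfolding coeff using p(1) by (subst prime_dvd_prod_iff) auto
qed

theorem lemma8p1:
  fixes p g s :: nat and c :: "nat \<Rightarrow> zpoly"
  assumes "prime p" and "odd p" and "g \<ge> 1" and "p > 2 * g + 1" and "s \<ge> 1"
    and "\<forall>l\<in>{1..g}. in_Zz (2*g+1) (c l)"
    and "\<forall>j\<in>{1..2*g+1}. in_pZ p (\<Sum>l=1..g. c l * Icomp (2*g+1) p s l j)"
  shows "\<forall>l\<in>{1..g}. in_pZ p (c l)"
proof
  fix l assume l: "l \<in> {1..g}"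
  let ?G = "\<lambda>l k. Icomp (2 * g + 1) p s l (2 * (g - k) + 1)"
  let ?\<nu> = "\<lambda>l. greedy_monomial (M p s) (2 * (g - l)) (M p s - l)"
  have d: "g + 1 \<le> M p s" using M_ge_Suc assms(2,4,5) by simp
  have j: "2 * (g - k) + 1 \<in> {1..2 * g + 1}" for k by auto
  have "int p dvd lookup (c l) m" for m
  proof (rule triangular_leading_terms_independent_mod[where G = ?G and \<nu> = ?\<nu>])
    show "prime_elem (int p)" using assms(1) by simp
  next
    fix l k b assume "l \<in> {1..g}" "k \<in> {1..g}" "\<not> int p dvd lookup (?G l k) b"
    then show "b \<le> ?\<nu> l" by (intro Icomp_le_greedy_monomial[OF assms(2) d _ j[of k]]) auto
  next
    fix l k b assume "l \<in> {1..g}" "k \<in> {1..g}" "l < k" "\<not> int p dvd lookup (?G l k) b"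
    then show "b \<noteq> ?\<nu> l" by (intro Icomp_ne_greedy_monomial[OF assms(2) d _ j[of k]]) auto
  next
    show "\<And>k. k \<in> {1..g} \<Longrightarrow> \<not> int p dvd lookup (?G k k) (?\<nu> k)"
      using Icomp_diagonal_not_dvd assms(1,2,4,5) by simp
  next
    show "\<And>k m. k \<in> {1..g} \<Longrightarrow> int p dvd lookup (\<Sum>l\<in>{1..g}. c l * ?G l k) m"
      using assms(7) j by (simp add: in_pZ_def)
  qed (use l in auto)
  then show "in_pZ p (c l)" by (simp add: in_pZ_def)
qed

end
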